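(* Let $n\in\mathbb{N}$, $r\in\mathbb{N}_0$, and let $u(x,t_r)$ be smooth on $\mathbb{R}^2$. Let $F_n,H_n$ (degree $n$ in $z$, leading coefficient $1$), $G_{n-1}$ (degree $\le n-1$), $\tilde F_r,\tilde H_r$ (degree $r$), $\tilde G_{r-1}$ (degree $\le r-1$, $\tilde G_{-1}=0$) be polynomials in $z$ with coefficients smooth in $(x,t_r)$, satisfying for all $z\in\mathbb{C}$: $F_{n,x}=-iu_xF_n-2izG_{n-1}$, $H_{n,x}=iu_xH_n+2izG_{n-1}$, $G_{n-1,x}=i(H_n-F_n)$, $u_{xt_r}=-2i\tilde G_{r-1,x}-2(\tilde H_r-\tilde F_r)$, $\tilde F_{r,x}=-iu_x\tilde F_r-2iz\tilde G_{r-1}$, $\tilde H_{r,x}=iu_x\tilde H_r+2iz\tilde G_{r-1}$, and $z^2G_{n-1}^2+zF_nH_n=R_{2n+1}(z)=\prod_{m=0}^{2n}(z-E_m)$ independent of $(x,t_r)$, with $E_0=0$, $E_m\neq0$ for $m=1,\dots,2n$. On the curve $\mathcal{K}_n:y^2=R_{2n+1}(z)$ (compactified by $P_\infty$) define for $P=(z,y)\neq P_\infty$ $$\phi(P,x,t_r)=\frac{y-zG_{n-1}(z,x,t_r)}{F_n(z,x,t_r)}=\frac{zH_n(z,x,t_r)}{y+zG_{n-1}(z,x,t_r)}.$$ Then for $P=(z,y)\in\mathcal{K}_n\setminus\{P_\infty\}$, $(x,t_r)\in\mathbb{R}^2$: $\phi^2-i\phi_x=z+u_x\phi$; $\phi_{t_r}=\tilde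 F_r-\tilde H_r+\frac iz(\phi\tilde F_r)_x$; $\phi(P)+\phi(P^* )=-2zG_{n-1}/F_n$; $\phi(P)\phi(P^* )=-zH_n/F_n$; $\phi(P)-\phi(P^* )=2y(P)/F_n$, where $P^*=(z,-y)$.
   Context: $y(P)$ is the meromorphic function on $\mathcal{K}_n$ with $y^2=R_{2n+1}(z)$; $P^*=(z,-y)$ is the sheet-exchange involution. *)

theory Defs
  imports "HOL-Analysis.Analysis" "HOL-Computational_Algebra.Polynomial"
begin

fun Ck_on_UNIV :: "nat \<Rightarrow> ('a::real_normed_vector \<Rightarrow> 'b::real_normed_vector) \<Rightarrow> bool" where
  "Ck_on_UNIV 0 f = continuous_on UNIV f"
| "Ck_on_UNIV (Suc k) f =
     (\<exists>f'. (\<forall>p. (f has_derivative f' p) (at p)) \<and> (\<forall>v. Ck_on_UNIV k (\<lambda>p. f' p v)))"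

definition smooth_UNIV :: "('a::real_normed_vector \<Rightarrow> 'b::real_normed_vector) \<Rightarrow> bool" where
  "smooth_UNIV f \<longleftrightarrow> (\<forall>k. Ck_on_UNIV k f)"

definition smooth_poly_family :: "(real \<Rightarrow> real \<Rightarrow> complex poly) \<Rightarrow> bool" where
  "smooth_poly_family F \<longleftrightarrow> (\<forall>k. smooth_UNIV (\<lambda>(x,t). coeff (F x t) k))"

definition Rpoly :: "nat \<Rightarrow> (nat \<Rightarrow> complex) \<Rightarrow> complex \<Rightarrow> complex" where
  "Rpoly n E z = (\<Prod>m=0..2*n. (z - E m))"

definition phi ::
  "(real \<Rightarrow> real \<Rightarrow> complex poly) \<Rightarrow> (real \<Rightarrow> real \<Rightarrow> complex poly) \<Rightarrow> (real \<Rightarrow> real \<Rightarrow> complex poly)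
   \<Rightarrow> complex \<Rightarrow> complex \<Rightarrow> real \<Rightarrow> real \<Rightarrow> complex" where
  "phi F G H z y x t =
     (if poly (F x t) z \<noteq> 0 then (y - z * poly (G x t) z) / poly (F x t) z
      else z * poly (H x t) z / (y + z * poly (G x t) z))"

end

theory Submission
  imports Defs
begin

text \<open>
  Write Ft, Gt, Ht for the polynomials with a tilde; FT, GT, HT below are the t-derivatives of
  F, G, H.

  The relations between phi(P) and phi(P*) are algebra on y^2 = z^2 G^2 + z F H. Away from the
  point at infinity, phi satisfies phi F = y - z G and phi (y + z G) = z H, and at least one of these
  determines phi near a given point; differentiating both and inserting the x-equations gives the
  Riccati equation, and likewise the t-equation once the t-derivatives of F, G, H are known.

  Those t-derivatives are not among the hypotheses; they are forced by the x-flow. The defects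
  A = FT - 2 (G Ft - F Gt), B = z GT - (F Ht - Ft H), C = HT - 2 (H Gt - G Ht) are polynomials
  in z. Because mixed partial derivatives commute, they satisfy the linear system
  A_x = -i u_x A - 2i B, B_x = i z (C - A), and differentiating the curve equation in t
  gives 2 G B + A H + F C = 0. As F and H are monic of degree n and deg G < n, comparing
  coefficients from the top degree down shows A = B = C = 0.
\<close>

section \<open>Mixed partial derivatives\<close>

lemma has_derivative_partial1:
  fixes f :: "real \<times> real \<Rightarrow> 'b::real_normed_vector"
  assumes "(f has_derivative D) (at (x, t))"
  shows "((\<lambda>s. f (s, t)) has_vector_derivative D (1, 0)) (at x)"
proof -
  have "((\<lambda>s. (s, t)) has_derivative (\<lambda>h. (h, 0))) (at x)"
    by (intro has_derivative_Pair has_derivative_ident has_derivative_const)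
  from has_derivative_compose[OF this assms]
  have "((\<lambda>s. f (s, t)) has_derivative (\<lambda>h. D (h, 0))) (at x)" .
  moreover have "(\<lambda>h. D (h, 0)) = (\<lambda>h. h *\<^sub>R D (1, 0))"
  proof
    fix h :: real
    have "(h, 0) = h *\<^sub>R (1, 0)" by simp
    then show "D (h, 0) = h *\<^sub>R D (1, 0)"
      using linear_scale[OF has_derivative_linear[OF assms]] by metis
  qed
  ultimately show ?thesis
    unfolding has_vector_derivative_def by simp
qed

lemma has_derivative_partial2:
  fixes f :: "real \<times> real \<Rightarrow> 'b::real_normed_vector"
  assumes "(f has_derivative D) (at (x, t))"
  shows "((\<lambda>\<tau>. f (x, \<tau>)) has_vector_derivative D (0, 1)) (at t)"
proof -
  have "((\<lambda>\<tau>. (x, \<tau>)) has_derivative (\<lambda>h. (0, h))) (at t)"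
    by (intro has_derivative_Pair has_derivative_ident has_derivative_const)
  from has_derivative_compose[OF this assms]
  have "((\<lambda>\<tau>. f (x, \<tau>)) has_derivative (\<lambda>h. D (0, h))) (at t)" .
  moreover have "(\<lambda>h. D (0, h)) = (\<lambda>h. h *\<^sub>R D (0, 1))"
  proof
    fix h :: real
    have "(0, h) = h *\<^sub>R (0, 1)" by simp
    then show "D (0, h) = h *\<^sub>R D (0, 1)"
      using linear_scale[OF has_derivative_linear[OF assms]] by metis
  qed
  ultimately show ?thesis
    unfolding has_vector_derivative_def by simp
qed

lemma norm_increment_le_of_derivative_near:
  fixes g :: "real \<Rightarrow> 'b::real_normed_vector"
  assumes "a \<le> b"
    and g': "\<And>s. s \<in> {a..b} \<Longrightarrow> (g has_vector_derivative g' s) (at s)"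
    and near: "\<And>s. s \<in> {a..b} \<Longrightarrow> norm (g' s - L) \<le> e"
  shows "norm (g b - g a - (b - a) *\<^sub>R L) \<le> e * (b - a)"
proof (cases "a = b")
  case False
  then have "a < b" using \<open>a \<le> b\<close> by simp
  have d: "((\<lambda>s. g s - s *\<^sub>R L) has_vector_derivative g' s - L) (at s)" if "s \<in> {a..b}" for s
    using g'[OF that] by (auto intro!: derivative_eq_intros)
  have "norm ((g b - b *\<^sub>R L) - (g a - a *\<^sub>R L)) \<le> e * b - e * a"
  proof (rule differentiable_bound_general[OF \<open>a < b\<close>])
    show "continuous_on {a..b} (\<lambda>s. g s - s *\<^sub>R L)"
      using d by (intro continuous_on_vector_derivative) (auto intro: has_vector_derivative_at_within)
    show "continuous_on {a..b} ((*) e)"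
      by (intro continuous_intros)
    show "((\<lambda>s. g s - s *\<^sub>R L) has_vector_derivative g' s - L) (at s)" if "a < s" "s < b" for s
      using d that by simp
    show "((*) e has_vector_derivative e) (at s)" for s
      by (auto intro!: derivative_eq_intros)
    show "norm (g' s - L) \<le> e" if "a < s" "s < b" for s
      using near that by simp
  qed
  then show ?thesis
    by (simp add: algebra_simps)
qed simp

lemma second_difference_estimate:
  fixes f :: "real \<Rightarrow> real \<Rightarrow> 'b::real_normed_vector"
  assumes ft: "\<And>s \<tau>. ((\<lambda>\<sigma>. f s \<sigma>) has_vector_derivative ft s \<tau>) (at \<tau>)"
    and ftx: "\<And>s \<tau>. ((\<lambda>\<sigma>. ft \<sigma> \<tau>) has_vector_derivative ftx s \<tau>) (at s)"
    and near: "\<And>s \<tau>. s \<in> {x..x + h} \<Longrightarrow> \<tau> \<in> {t..t + h} \<Longrightarrow> norm (ftx s \<tau> - L) \<le> e"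
    and "0 \<le> h"
  shows "norm (f (x + h) (t + h) - f x (t + h) - f (x + h) t + f x t - (h * h) *\<^sub>R L) \<le> e * h * h"
proof -
  have inner: "norm (ft (x + h) \<tau> - ft x \<tau> - h *\<^sub>R L) \<le> e * h" if "\<tau> \<in> {t..t + h}" for \<tau>
    using norm_increment_le_of_derivative_near[of x "x + h" "\<lambda>s. ft s \<tau>", OF _ ftx near]
      \<open>0 \<le> h\<close> that by simp
  have d: "((\<lambda>\<sigma>. f (x + h) \<sigma> - f x \<sigma>) has_vector_derivative ft (x + h) \<tau> - ft x \<tau>) (at \<tau>)" for \<tau>
    by (intro has_vector_derivative_diff ft)
  have "norm ((f (x + h) (t + h) - f x (t + h)) - (f (x + h) t - f x t) - h *\<^sub>R (h *\<^sub>R L))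
      \<le> (e * h) * h"
    using norm_increment_le_of_derivative_near[of t "t + h", OF _ d, of "h *\<^sub>R L" "e * h"]
      \<open>0 \<le> h\<close> inner by simp
  then show ?thesis
    by (simp add: algebra_simps)
qed

lemma continuous_at_square_bound:
  fixes g :: "real \<Rightarrow> real \<Rightarrow> 'b::real_normed_vector"
  assumes "continuous (at (x, t)) (\<lambda>p. g (fst p) (snd p))" "e > 0"
  obtains h where "h > 0" "\<And>s \<tau>. s \<in> {x..x + h} \<Longrightarrow> \<tau> \<in> {t..t + h} \<Longrightarrow> norm (g s \<tau> - g x t) \<le> e"
proof -
  obtain d where "d > 0" and d: "\<And>p. dist p (x, t) < d \<Longrightarrow> dist (g (fst p) (snd p)) (g x t) < e"
    using assms unfolding continuous_at_eps_delta by fastforce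
  show thesis
  proof
    show "d / 3 > 0"
      using \<open>d > 0\<close> by simp
    fix s \<tau> assume "s \<in> {x..x + d / 3}" "\<tau> \<in> {t..t + d / 3}"
    then have "dist (s, \<tau>) (x, t) < d"
      using norm_Pair_le[of "s - x" "\<tau> - t"] \<open>d > 0\<close> by (simp add: dist_norm)
    then show "norm (g s \<tau> - g x t) \<le> e"
      using d[of "(s, \<tau>)"] by (simp add: dist_norm)
  qed
qed

lemma mixed_partials_eq:
  fixes f :: "real \<Rightarrow> real \<Rightarrow> 'b::real_normed_vector"
  assumes fx: "\<And>s \<tau>. ((\<lambda>\<sigma>. f \<sigma> \<tau>) has_vector_derivative fx s \<tau>) (at s)"
    and ft: "\<And>s \<tau>. ((\<lambda>\<sigma>. f s \<sigma>) has_vector_derivative ft s \<tau>) (at \<tau>)"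
    and fxt: "\<And>s \<tau>. ((\<lambda>\<sigma>. fx s \<sigma>) has_vector_derivative fxt s \<tau>) (at \<tau>)"
    and ftx: "\<And>s \<tau>. ((\<lambda>\<sigma>. ft \<sigma> \<tau>) has_vector_derivative ftx s \<tau>) (at s)"
    and cont_fxt: "continuous (at (x, t)) (\<lambda>p. fxt (fst p) (snd p))"
    and cont_ftx: "continuous (at (x, t)) (\<lambda>p. ftx (fst p) (snd p))"
  shows "fxt x t = ftx x t"
proof -
  have bound: "norm (fxt x t - ftx x t) \<le> 2 * e" if "e > 0" for e
  proof -
    obtain h1 where "h1 > 0"
      and h1: "\<And>s \<tau>. s \<in> {x..x + h1} \<Longrightarrow> \<tau> \<in> {t..t + h1} \<Longrightarrow> norm (fxt s \<tau> - fxt x t) \<le> e"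
      using continuous_at_square_bound[OF cont_fxt \<open>e > 0\<close>] by blast
    obtain h2 where "h2 > 0"
      and h2: "\<And>s \<tau>. s \<in> {x..x + h2} \<Longrightarrow> \<tau> \<in> {t..t + h2} \<Longrightarrow> norm (ftx s \<tau> - ftx x t) \<le> e"
      using continuous_at_square_bound[OF cont_ftx \<open>e > 0\<close>] by blast
    define h where "h = min h1 h2"
    have "h > 0"
      using \<open>h1 > 0\<close> \<open>h2 > 0\<close> by (simp add: h_def)
    have near: "norm (fxt s \<tau> - fxt x t) \<le> e" "norm (ftx s \<tau> - ftx x t) \<le> e"
      if "s \<in> {x..x + h}" "\<tau> \<in> {t..t + h}" for s \<tau>
      using h1[of s \<tau>] h2[of s \<tau>] that by (auto simp: h_def)
    define \<Delta> where "\<Delta> = f (x + h) (t + h) - f x (t + h) - f (x + h) t + f x t"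
    have est_tx: "norm (\<Delta> - (h * h) *\<^sub>R ftx x t) \<le> e * h * h"
      unfolding \<Delta>_def using \<open>h > 0\<close> by (intro second_difference_estimate[OF ft ftx near(2)]) simp_all
    have "\<Delta> = f (x + h) (t + h) - f (x + h) t - f x (t + h) + f x t"
      by (simp add: \<Delta>_def algebra_simps)
    then have est_xt: "norm (\<Delta> - (h * h) *\<^sub>R fxt x t) \<le> e * h * h"
      using second_difference_estimate[of "\<lambda>\<tau> s. f s \<tau>", OF fx fxt near(1)] \<open>h > 0\<close> by simp
    have split: "(h * h) *\<^sub>R (fxt x t - ftx x t) = (\<Delta> - (h * h) *\<^sub>R ftx x t) - (\<Delta> - (h * h) *\<^sub>R fxt x t)"
      by (simp add: algebra_simps)
    have "(h * h) * norm (fxt x t - ftx x t) = norm ((\<Delta> - (h * h) *\<^sub>R ftx x t) - (\<Delta> - (h * h) *\<^sub>R fxt x t))"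
      unfolding split[symmetric] by simp
    also have "\<dots> \<le> norm (\<Delta> - (h * h) *\<^sub>R ftx x t) + norm (\<Delta> - (h * h) *\<^sub>R fxt x t)"
      by (rule norm_triangle_ineq4)
    also have "\<dots> \<le> e * h * h + e * h * h"
      using est_tx est_xt by linarith
    finally have "(h * h) * norm (fxt x t - ftx x t) \<le> (h * h) * (2 * e)"
      by (simp add: algebra_simps)
    then show ?thesis
      using \<open>h > 0\<close> by simp
  qed
  have "norm (fxt x t - ftx x t) \<le> 0 + e" if "e > 0" for e
    using bound[of "e / 2"] that by simp
  then have "norm (fxt x t - ftx x t) \<le> 0"
    by (rule field_le_epsilon)
  then show ?thesis
    by simp
qed

definition partial_x :: "(real \<Rightarrow> real \<Rightarrow> 'b::real_normed_vector) \<Rightarrow> real \<Rightarrow> real \<Rightarrow> 'b" where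
  "partial_x f x t = vector_derivative (\<lambda>s. f s t) (at x)"

definition partial_t :: "(real \<Rightarrow> real \<Rightarrow> 'b::real_normed_vector) \<Rightarrow> real \<Rightarrow> real \<Rightarrow> 'b" where
  "partial_t f x t = vector_derivative (\<lambda>\<tau>. f x \<tau>) (at t)"

lemma C2_partial_derivatives:
  fixes f :: "real \<Rightarrow> real \<Rightarrow> 'b::real_normed_vector"
  assumes "Ck_on_UNIV 2 (\<lambda>(x, t). f x t)"
  shows has_partial_x: "((\<lambda>s. f s t) has_vector_derivative partial_x f x t) (at x)"
    and has_partial_t: "((\<lambda>\<tau>. f x \<tau>) has_vector_derivative partial_t f x t) (at t)"
    and has_partial_xt: "((\<lambda>\<tau>. partial_x f x \<tau>) has_vector_derivative partial_t (partial_x f) x t) (at t)"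
    and has_partial_tx: "((\<lambda>s. partial_t f s t) has_vector_derivative partial_t (partial_x f) x t) (at x)"
proof -
  obtain f' where f': "\<And>p. ((\<lambda>(x, t). f x t) has_derivative f' p) (at p)"
    and f'': "\<And>v. \<exists>g. (\<forall>p. ((\<lambda>p. f' p v) has_derivative g p) (at p)) \<and> (\<forall>w. continuous_on UNIV (\<lambda>p. g p w))"
    using assms by (auto simp: numeral_2_eq_2)
  obtain g1 where g1: "\<And>p. ((\<lambda>p. f' p (1, 0)) has_derivative g1 p) (at p)"
    and cont1: "continuous_on UNIV (\<lambda>p. g1 p (0, 1))"
    using f''[of "(1, 0)"] by blast
  obtain g2 where g2: "\<And>p. ((\<lambda>p. f' p (0, 1)) has_derivative g2 p) (at p)"
    and cont2: "continuous_on UNIV (\<lambda>p. g2 p (1, 0))"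
    using f''[of "(0, 1)"] by blast
  have fx: "((\<lambda>s. f s t) has_vector_derivative f' (x, t) (1, 0)) (at x)" for x t
    using has_derivative_partial1[OF f'] by simp
  have ft: "((\<lambda>\<tau>. f x \<tau>) has_vector_derivative f' (x, t) (0, 1)) (at t)" for x t
    using has_derivative_partial2[OF f'] by simp
  have fxt: "((\<lambda>\<tau>. f' (x, \<tau>) (1, 0)) has_vector_derivative g1 (x, t) (0, 1)) (at t)" for x t
    by (rule has_derivative_partial2[OF g1])
  have ftx: "((\<lambda>s. f' (s, t) (0, 1)) has_vector_derivative g2 (x, t) (1, 0)) (at x)" for x t
    by (rule has_derivative_partial1[OF g2])
  have fx_eq: "partial_x f = (\<lambda>x t. f' (x, t) (1, 0))"
    unfolding partial_x_def using fx by (intro ext vector_derivative_at)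
  have ft_eq: "partial_t f = (\<lambda>x t. f' (x, t) (0, 1))"
    unfolding partial_t_def using ft by (intro ext vector_derivative_at)
  have fxt_eq: "partial_t (partial_x f) x t = g1 (x, t) (0, 1)"
    unfolding partial_t_def fx_eq using fxt by (rule vector_derivative_at)
  have "g1 (x, t) (0, 1) = g2 (x, t) (1, 0)"
    by (rule mixed_partials_eq[OF fx ft fxt ftx])
      (use cont1 cont2 in \<open>auto simp: continuous_on_eq_continuous_at\<close>)
  then show "((\<lambda>s. partial_t f s t) has_vector_derivative partial_t (partial_x f) x t) (at x)"
    unfolding fxt_eq ft_eq using ftx by simp
  show "((\<lambda>s. f s t) has_vector_derivative partial_x f x t) (at x)"
    unfolding fx_eq by (rule fx)
  show "((\<lambda>\<tau>. f x \<tau>) has_vector_derivative partial_t f x t) (at t)"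
    unfolding ft_eq by (rule ft)
  show "((\<lambda>\<tau>. partial_x f x \<tau>) has_vector_derivative partial_t (partial_x f) x t) (at t)"
    unfolding fxt_eq unfolding fx_eq by (rule fxt)
qed

lemma smooth_deriv_x_has_derivative_t:
  assumes "smooth_UNIV (\<lambda>(x, t). u x t)"
  shows "((\<lambda>\<tau>. deriv (\<lambda>s. u s \<tau>) x) has_real_derivative deriv (\<lambda>\<tau>. deriv (\<lambda>s. u s \<tau>) x) t) (at t)"
proof -
  have C2: "Ck_on_UNIV 2 (\<lambda>(x, t). u x t)"
    using assms unfolding smooth_UNIV_def by blast
  have "deriv (\<lambda>s. u s \<tau>) x = partial_x u x \<tau>" for \<tau>
    using has_partial_x[OF C2, of \<tau> x] by (simp add: DERIV_imp_deriv has_real_derivative_iff_has_vector_derivative)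
  then have "(\<lambda>\<tau>. deriv (\<lambda>s. u s \<tau>) x) = (\<lambda>\<tau>. partial_x u x \<tau>)"
    by (rule ext)
  with has_partial_xt[OF C2, of x t] show ?thesis
    by (simp add: DERIV_imp_deriv has_real_derivative_iff_has_vector_derivative)
qed

section \<open>Coefficientwise derivatives of polynomial-valued functions\<close>

definition poly_has_derivative :: "(real \<Rightarrow> 'a::real_normed_field poly) \<Rightarrow> 'a poly \<Rightarrow> real \<Rightarrow> bool" where
  "poly_has_derivative P P' a \<longleftrightarrow> (\<forall>k. ((\<lambda>s. coeff (P s) k) has_vector_derivative coeff P' k) (at a))"

lemma poly_has_derivative_const: "poly_has_derivative (\<lambda>s. p) 0 a"
  by (simp add: poly_has_derivative_def)

lemma poly_has_derivative_add:
  "poly_has_derivative P P' a \<Longrightarrow> poly_has_derivative Q Q' a \<Longrightarrow>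
    poly_has_derivative (\<lambda>s. P s + Q s) (P' + Q') a"
  by (auto simp: poly_has_derivative_def intro!: has_vector_derivative_add)

lemma poly_has_derivative_diff:
  "poly_has_derivative P P' a \<Longrightarrow> poly_has_derivative Q Q' a \<Longrightarrow>
    poly_has_derivative (\<lambda>s. P s - Q s) (P' - Q') a"
  by (auto simp: poly_has_derivative_def intro!: has_vector_derivative_diff)

lemma poly_has_derivative_mult:
  assumes "poly_has_derivative P P' a" "poly_has_derivative Q Q' a"
  shows "poly_has_derivative (\<lambda>s. P s * Q s) (P' * Q a + P a * Q') a"
  unfolding poly_has_derivative_def
proof
  fix k
  have "((\<lambda>s. \<Sum>i\<le>k. coeff (P s) i * coeff (Q s) (k - i)) has_vector_derivative
      (\<Sum>i\<le>k. coeff (P a) i * coeff Q' (k - i) + coeff P' i * coeff (Q a) (k - i))) (at a)"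
    using assms unfolding poly_has_derivative_def
    by (intro has_vector_derivative_sum has_vector_derivative_mult) auto
  then show "((\<lambda>s. coeff (P s * Q s) k) has_vector_derivative coeff (P' * Q a + P a * Q') k) (at a)"
    by (simp add: coeff_mult sum.distrib add.commute)
qed

lemma poly_has_derivative_smult:
  assumes "(c has_vector_derivative c') (at a)" "poly_has_derivative P P' a"
  shows "poly_has_derivative (\<lambda>s. smult (c s) (P s)) (smult (c a) P' + smult c' (P a)) a"
  using assms by (auto simp: poly_has_derivative_def intro!: has_vector_derivative_mult)

lemma poly_has_derivative_pCons_0:
  "poly_has_derivative P P' a \<Longrightarrow> poly_has_derivative (\<lambda>s. pCons 0 (P s)) (pCons 0 P') a"
  by (auto simp: poly_has_derivative_def coeff_pCons split: nat.split)

lemma poly_has_derivative_unique: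
  assumes "poly_has_derivative P P1 a" "poly_has_derivative P P2 a"
  shows "P1 = P2"
proof (rule poly_eqI)
  fix k
  have "((\<lambda>s. coeff (P s) k) has_vector_derivative coeff P1 k) (at a)"
       "((\<lambda>s. coeff (P s) k) has_vector_derivative coeff P2 k) (at a)"
    using assms unfolding poly_has_derivative_def by blast+
  then show "coeff P1 k = coeff P2 k"
    by (rule vector_derivative_unique_at)
qed

lemma poly_has_derivative_coeff_eq_0:
  assumes "poly_has_derivative P P' a" "\<And>s. coeff (P s) k = 0"
  shows "coeff P' k = 0"
proof -
  have "(\<lambda>s. coeff (P s) k) = (\<lambda>s. 0)"
    using assms(2) by simp
  then have "((\<lambda>s. 0) has_vector_derivative coeff P' k) (at a)"
    using assms(1) unfolding poly_has_derivative_def by metis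
  then show ?thesis
    using vector_derivative_unique_at has_vector_derivative_const by metis
qed

lemma poly_has_derivative_degree_le:
  assumes "poly_has_derivative P P' a" "\<And>s. degree (P s) \<le> N"
  shows "degree P' \<le> N"
proof (rule degree_le, intro allI impI)
  fix k assume "N < k"
  then have "coeff (P s) k = 0" for s
    using assms(2)[of s] by (intro coeff_eq_0) simp
  then show "coeff P' k = 0"
    by (rule poly_has_derivative_coeff_eq_0[OF assms(1)])
qed

lemma poly_has_derivative_poly:
  assumes "poly_has_derivative P P' a" "\<And>s. degree (P s) \<le> N"
  shows "((\<lambda>s. poly (P s) z) has_vector_derivative poly P' z) (at a)"
proof -
  have sum: "poly p z = (\<Sum>k\<le>N. coeff p k * z ^ k)" if "degree p \<le> N" for p
    unfolding poly_altdef
    by (rule sum.mono_neutral_left) (use that in \<open>auto simp: coeff_eq_0\<close>)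
  have "((\<lambda>s. \<Sum>k\<le>N. coeff (P s) k * z ^ k) has_vector_derivative (\<Sum>k\<le>N. coeff P' k * z ^ k)) (at a)"
    using assms(1) unfolding poly_has_derivative_def
    by (intro has_vector_derivative_sum has_vector_derivative_mult_left) auto
  moreover have "(\<lambda>s. poly (P s) z) = (\<lambda>s. \<Sum>k\<le>N. coeff (P s) k * z ^ k)"
    by (rule ext) (rule sum[OF assms(2)])
  moreover have "poly P' z = (\<Sum>k\<le>N. coeff P' k * z ^ k)"
    by (rule sum[OF poly_has_derivative_degree_le[OF assms]])
  ultimately show ?thesis
    by (simp only:)
qed

lemma poly_has_derivative_unique_poly:
  assumes "poly_has_derivative P P' a" "\<And>s. degree (P s) \<le> N"
    and "\<And>z. ((\<lambda>s. poly (P s) z) has_vector_derivative poly Q z) (at a)"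
  shows "P' = Q"
proof -
  have "poly P' z = poly Q z" for z
    using poly_has_derivative_poly[OF assms(1,2)] assms(3) by (rule vector_derivative_unique_at)
  then have "poly P' = poly Q" ..
  then show ?thesis
    by (simp only: poly_eq_poly_eq_iff)
qed

lemma smooth_poly_family_partials:
  assumes "smooth_poly_family Q" "\<And>x t. degree (Q x t) \<le> N"
  obtains Qx Qt where
    "\<And>x t. poly_has_derivative (\<lambda>s. Q s t) (Qx x t) x"
    "\<And>x t. poly_has_derivative (\<lambda>\<tau>. Q x \<tau>) (Qt x t) t"
    "\<And>x t W. poly_has_derivative (\<lambda>\<tau>. Qx x \<tau>) W t \<Longrightarrow> poly_has_derivative (\<lambda>s. Qt s t) W x"
proof
  define c where "c k = (\<lambda>x t. coeff (Q x t) k)" for k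
  define Qx where "Qx x t = (\<Sum>k\<le>N. monom (partial_x (c k) x t) k)" for x t
  define Qt where "Qt x t = (\<Sum>k\<le>N. monom (partial_t (c k) x t) k)" for x t
  have C2: "Ck_on_UNIV 2 (\<lambda>(x, t). c k x t)" for k
    using assms(1) unfolding smooth_poly_family_def smooth_UNIV_def c_def by blast
  have high: "c k = (\<lambda>x t. 0)" if "N < k" for k
  proof (intro ext)
    fix x t
    show "c k x t = 0"
      using assms(2)[of x t] that unfolding c_def by (intro coeff_eq_0) linarith
  qed
  have coeff_Qx: "coeff (Qx x t) k = partial_x (c k) x t" for x t k
    by (cases "k \<le> N") (auto simp: Qx_def coeff_sum high partial_x_def)
  have coeff_Qt: "coeff (Qt x t) k = partial_t (c k) x t" for x t k
    by (cases "k \<le> N") (auto simp: Qt_def coeff_sum high partial_t_def)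
  show "poly_has_derivative (\<lambda>s. Q s t) (Qx x t) x" for x t
    unfolding poly_has_derivative_def coeff_Qx
    using has_partial_x[OF C2] by (simp add: c_def)
  show "poly_has_derivative (\<lambda>\<tau>. Q x \<tau>) (Qt x t) t" for x t
    unfolding poly_has_derivative_def coeff_Qt
    using has_partial_t[OF C2] by (simp add: c_def)
  show "poly_has_derivative (\<lambda>s. Qt s t) W x" if "poly_has_derivative (\<lambda>\<tau>. Qx x \<tau>) W t" for x t W
    unfolding poly_has_derivative_def
  proof
    fix k
    have "((\<lambda>\<tau>. partial_x (c k) x \<tau>) has_vector_derivative coeff W k) (at t)"
      using that unfolding poly_has_derivative_def coeff_Qx by blast
    then have "coeff W k = partial_t (partial_x (c k)) x t"
      using has_partial_xt[OF C2] by (rule vector_derivative_unique_at)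
    then show "((\<lambda>s. coeff (Qt s t) k) has_vector_derivative coeff W k) (at x)"
      unfolding coeff_Qt using has_partial_tx[OF C2] by simp
  qed
qed

lemma smooth_poly_family_x_derivative:
  assumes "smooth_poly_family Q" "\<And>x t. degree (Q x t) \<le> N"
    and "\<And>z. ((\<lambda>s. poly (Q s t) z) has_vector_derivative poly P z) (at x)"
  shows "poly_has_derivative (\<lambda>s. Q s t) P x"
proof -
  obtain Qx where Qx: "\<And>x t. poly_has_derivative (\<lambda>s. Q s t) (Qx x t) x"
    by (rule smooth_poly_family_partials[OF assms(1,2)]) blast
  have "Qx x t = P"
    using poly_has_derivative_unique_poly[OF Qx assms(2) assms(3)] .
  then show ?thesis
    using Qx[where x=x and t=t] by simp
qed

lemma smooth_poly_family_t_derivative: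
  assumes "smooth_poly_family Q" "\<And>x t. degree (Q x t) \<le> N"
    and Qx: "\<And>x t. poly_has_derivative (\<lambda>s. Q s t) (Qx x t) x"
  obtains Qt where
    "\<And>x t. poly_has_derivative (\<lambda>\<tau>. Q x \<tau>) (Qt x t) t"
    "\<And>x t W. poly_has_derivative (\<lambda>\<tau>. Qx x \<tau>) W t \<Longrightarrow> poly_has_derivative (\<lambda>s. Qt s t) W x"
proof -
  obtain Qx' Qt where Qx': "\<And>x t. poly_has_derivative (\<lambda>s. Q s t) (Qx' x t) x"
    and Qt: "\<And>x t. poly_has_derivative (\<lambda>\<tau>. Q x \<tau>) (Qt x t) t"
    and mixed: "\<And>x t W. poly_has_derivative (\<lambda>\<tau>. Qx' x \<tau>) W t \<Longrightarrow> poly_has_derivative (\<lambda>s. Qt s t) W x"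
    by (rule smooth_poly_family_partials[OF assms(1,2)]) blast
  have "Qx' = Qx"
    using poly_has_derivative_unique[OF Qx' Qx] by (intro ext)
  then have "poly_has_derivative (\<lambda>s. Qt s t) W x" if "poly_has_derivative (\<lambda>\<tau>. Qx x \<tau>) W t" for x t W
    using mixed that by blast
  with Qt show thesis
    by (rule that)
qed

section \<open>The t-derivatives of F, G and H\<close>

lemma coeff_mult_degree_le_sum:
  fixes p q :: "'a::comm_semiring_0 poly"
  assumes "degree p \<le> m" "degree q \<le> n"
  shows "coeff (p * q) (m + n) = coeff p m * coeff q n"
proof (cases "degree p = m \<and> degree q = n")
  case True
  then show ?thesis
    using coeff_mult_degree_sum[of p q] by simp
next
  case False
  then have "coeff p m * coeff q n = 0"
    using assms by (auto simp: coeff_eq_0)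
  moreover have "coeff (p * q) (m + n) = 0"
    using False assms degree_mult_le[of p q] by (intro coeff_eq_0) linarith
  ultimately show ?thesis
    by simp
qed

lemma degree_le_if_coeff_Suc_eq_0:
  assumes "degree p \<le> Suc k" "coeff p (Suc k) = 0"
  shows "degree p \<le> k"
proof (rule degree_le, intro allI impI)
  fix i assume "k < i"
  then show "coeff p i = 0"
    using assms by (cases "i = Suc k") (auto simp: coeff_eq_0)
qed

context
  fixes A B C F G H :: "real \<Rightarrow> complex poly" and U :: "real \<Rightarrow> complex" and n :: nat
  assumes dA: "\<And>s. poly_has_derivative A (smult (- \<i> * U s) (A s) - smult (2 * \<i>) (B s)) s"
    and dB: "\<And>s. poly_has_derivative B (smult \<i> (pCons 0 (C s - A s))) s"
    and constraint: "\<And>s. smult 2 (G s * B s) + A s * H s + F s * C s = 0"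
    and F: "\<And>s. degree (F s) = n \<and> lead_coeff (F s) = 1"
    and H: "\<And>s. degree (H s) = n \<and> lead_coeff (H s) = 1"
    and G: "\<And>s. degree (G s) < n"
begin

lemma linearized_flow_top_coeffs_eq_0:
  assumes deg: "\<And>s. degree (A s) \<le> k" "\<And>s. degree (B s) \<le> k" "\<And>s. degree (C s) \<le> k"
  shows "coeff (A s) k = 0 \<and> coeff (B s) k = 0 \<and> coeff (C s) k = 0"
proof -
  have C_eq_A: "coeff (C s) k = coeff (A s) k" for s
  proof -
    have "coeff (B s') (Suc k) = 0" for s'
      using deg(2)[of s'] by (intro coeff_eq_0) simp
    then have "coeff (smult \<i> (pCons 0 (C s - A s))) (Suc k) = 0"
      by (rule poly_has_derivative_coeff_eq_0[OF dB])
    then show ?thesis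
      by simp
  qed
  have "coeff (A s) k + coeff (C s) k = 0" for s
  proof -
    have "coeff (G s * B s) (n + k) = 0"
      using degree_mult_le[of "G s" "B s"] G[of s] deg(2)[of s] by (intro coeff_eq_0) linarith
    moreover have "coeff (A s * H s) (k + n) = coeff (A s) k"
      using coeff_mult_degree_le_sum[of "A s" k "H s" n] deg(1)[of s] H[of s] by auto
    moreover have "coeff (F s * C s) (n + k) = coeff (C s) k"
      using coeff_mult_degree_le_sum[of "F s" n "C s" k] F[of s] deg(3)[of s] by auto
    moreover have "coeff (smult 2 (G s * B s) + A s * H s + F s * C s) (n + k) = 0"
      by (simp add: constraint)
    ultimately show ?thesis
      by (simp add: add.commute)
  qed
  with C_eq_A have A0: "coeff (A s) k = 0" and C0: "coeff (C s) k = 0" for s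
    by auto
  have "coeff (smult (- \<i> * U s) (A s) - smult (2 * \<i>) (B s)) k = 0"
    by (rule poly_has_derivative_coeff_eq_0[OF dA]) (use A0 in simp)
  then have "coeff (B s) k = 0"
    using A0 by simp
  with A0 C0 show ?thesis
    by simp
qed

lemma linearized_flow_solution_eq_0:
  assumes "\<And>s. degree (A s) \<le> D" "\<And>s. degree (B s) \<le> D" "\<And>s. degree (C s) \<le> D"
  shows "A s = 0 \<and> B s = 0 \<and> C s = 0"
proof -
  have "\<forall>s. degree (A s) \<le> k \<and> degree (B s) \<le> k \<and> degree (C s) \<le> k" if "k \<le> D" for k
    using that
  proof (induction k rule: inc_induct)
    case base
    then show ?case
      using assms by blast
  next
    case (step k)
    then have "coeff (A s) (Suc k) = 0 \<and> coeff (B s) (Suc k) = 0 \<and> coeff (C s) (Suc k) = 0" for s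
      by (intro linearized_flow_top_coeffs_eq_0) blast+
    with step.IH show ?case
      by (blast intro: degree_le_if_coeff_Suc_eq_0)
  qed
  then have deg0: "degree (A s) \<le> 0" "degree (B s) \<le> 0" "degree (C s) \<le> 0" for s
    by blast+
  have "coeff (A s) 0 = 0 \<and> coeff (B s) 0 = 0 \<and> coeff (C s) 0 = 0"
    by (rule linearized_flow_top_coeffs_eq_0[OF deg0])
  then show ?thesis
    using deg0[of s] by (simp add: leading_coeff_0_iff[symmetric])
qed

end

lemma poly_has_derivative_eq_rhs:
  "poly_has_derivative P P' a \<Longrightarrow> P' = Q \<Longrightarrow> poly_has_derivative P Q a"
  by simp

lemmas poly_eqI_eval = poly_eq_poly_eq_iff[THEN iffD1, OF ext]

lemma lax_time_derivatives_eq: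
  fixes F G H Ft Gt Ht FT GT HT :: "real \<Rightarrow> complex poly" and U Ut :: "real \<Rightarrow> complex"
  assumes F: "\<And>s. degree (F s) = n \<and> lead_coeff (F s) = 1"
    and H: "\<And>s. degree (H s) = n \<and> lead_coeff (H s) = 1"
    and G: "\<And>s. degree (G s) < n"
    and deg_Ft: "\<And>s. degree (Ft s) \<le> r" and deg_Gt: "\<And>s. degree (Gt s) \<le> r"
    and deg_Ht: "\<And>s. degree (Ht s) \<le> r"
    and deg_FT: "\<And>s. degree (FT s) \<le> n" and deg_GT: "\<And>s. degree (GT s) \<le> n"
    and deg_HT: "\<And>s. degree (HT s) \<le> n"
    and dF: "\<And>s. poly_has_derivative F (smult (- \<i> * U s) (F s) - smult (2 * \<i>) (pCons 0 (G s))) s"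
    and dG: "\<And>s. poly_has_derivative G (smult \<i> (H s - F s)) s"
    and dH: "\<And>s. poly_has_derivative H (smult (\<i> * U s) (H s) + smult (2 * \<i>) (pCons 0 (G s))) s"
    and dFt: "\<And>s. poly_has_derivative Ft (smult (- \<i> * U s) (Ft s) - smult (2 * \<i>) (pCons 0 (Gt s))) s"
    and dGt: "\<And>s. poly_has_derivative Gt ([:\<i> / 2 * Ut s:] + smult \<i> (Ht s - Ft s)) s"
    and dHt: "\<And>s. poly_has_derivative Ht (smult (\<i> * U s) (Ht s) + smult (2 * \<i>) (pCons 0 (Gt s))) s"
    and dFT: "\<And>s. poly_has_derivative FT
      (smult (- \<i> * Ut s) (F s) + smult (- \<i> * U s) (FT s) - smult (2 * \<i>) (pCons 0 (GT s))) s"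
    and dGT: "\<And>s. poly_has_derivative GT (smult \<i> (HT s - FT s)) s"
    and dHT: "\<And>s. poly_has_derivative HT
      (smult (\<i> * Ut s) (H s) + smult (\<i> * U s) (HT s) + smult (2 * \<i>) (pCons 0 (GT s))) s"
    and curve: "\<And>s. smult 2 (pCons 0 (G s * GT s)) + FT s * H s + F s * HT s = 0"
  shows "FT s = smult 2 (G s * Ft s - F s * Gt s)"
    and "pCons 0 (GT s) = F s * Ht s - Ft s * H s"
    and "HT s = smult 2 (H s * Gt s - G s * Ht s)"
proof -
  define A where "A s = FT s - smult 2 (G s * Ft s - F s * Gt s)" for s
  define B where "B s = pCons 0 (GT s) - (F s * Ht s - Ft s * H s)" for s
  define C where "C s = HT s - smult 2 (H s * Gt s - G s * Ht s)" for s
  have dA: "poly_has_derivative A (smult (- \<i> * U s) (A s) - smult (2 * \<i>) (B s)) s" for s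
    unfolding A_def
    by (rule poly_has_derivative_eq_rhs,
        (rule poly_has_derivative_diff poly_has_derivative_mult poly_has_derivative_smult
          has_vector_derivative_const dFT dG dFt dF dGt)+,
        rule poly_eqI_eval, simp add: A_def B_def algebra_simps)
  have dB: "poly_has_derivative B (smult \<i> (pCons 0 (C s - A s))) s" for s
    unfolding B_def
    by (rule poly_has_derivative_eq_rhs,
        (rule poly_has_derivative_diff poly_has_derivative_mult poly_has_derivative_pCons_0
          dGT dF dHt dFt dH)+,
        rule poly_eqI_eval, simp add: A_def C_def algebra_simps)
  have constraint: "smult 2 (G s * B s) + A s * H s + F s * C s = 0" for s
  proof (rule poly_eqI_eval)
    fix z
    have "poly (smult 2 (pCons 0 (G s * GT s)) + FT s * H s + F s * HT s) z = 0"
      by (simp only: curve poly_0)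
    then show "poly (smult 2 (G s * B s) + A s * H s + F s * C s) z = poly 0 z"
      by (simp add: A_def B_def C_def algebra_simps)
  qed
  have deg_prod: "degree (p * q) \<le> Suc (n + r)" if "degree p \<le> n" "degree q \<le> r" for p q :: "complex poly"
    using degree_mult_le[of p q] that by linarith
  have deg_n: "degree (F s) \<le> n" "degree (G s) \<le> n" "degree (H s) \<le> n" for s
    using F[of s] G[of s] H[of s] by auto
  have "degree (A s) \<le> Suc (n + r)" "degree (B s) \<le> Suc (n + r)" "degree (C s) \<le> Suc (n + r)" for s
    unfolding A_def B_def C_def
    using deg_n deg_Ft deg_Gt deg_Ht deg_FT[of s] deg_GT[of s] deg_HT[of s]
    by (auto intro!: degree_diff_le deg_prod order.trans[OF degree_smult_le]
        order.trans[OF degree_pCons_le] simp: mult.commute[of "Ft s"])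
  then have "A s = 0 \<and> B s = 0 \<and> C s = 0"
    using linearized_flow_solution_eq_0[OF dA dB constraint F H G] by blast
  then show "FT s = smult 2 (G s * Ft s - F s * Gt s)"
    and "pCons 0 (GT s) = F s * Ht s - Ft s * H s"
    and "HT s = smult 2 (H s * Gt s - G s * Ht s)"
    by (simp_all add: A_def B_def C_def)
qed

lemma poly_has_derivative_constant_eq_0:
  assumes "poly_has_derivative P P' a" "\<And>s. P s = P a"
  shows "P' = 0"
proof -
  have "P = (\<lambda>s. P a)"
    using assms(2) by (rule ext)
  with assms(1) have "poly_has_derivative (\<lambda>s. P a) P' a"
    by simp
  then show ?thesis
    using poly_has_derivative_const by (rule poly_has_derivative_unique)
qed

lemma poly_has_derivative_curve_eq_0:
  fixes F G H :: "real \<Rightarrow> complex poly"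
  assumes F': "poly_has_derivative F F' a" and G': "poly_has_derivative G G' a"
    and H': "poly_has_derivative H H' a"
    and curve: "\<And>s z. z\<^sup>2 * (poly (G s) z)\<^sup>2 + z * poly (F s) z * poly (H s) z = R z"
  shows "smult 2 (pCons 0 (G a * G')) + F' * H a + F a * H' = 0"
proof -
  define K where "K s = pCons 0 (pCons 0 (G s * G s) + F s * H s)" for s
  have "K s = K a" for s
  proof (rule poly_eqI_eval)
    fix z
    have "poly (K s') z = R z" for s'
      using curve[where s=s' and z=z] by (simp add: K_def power2_eq_square algebra_simps)
    then show "poly (K s) z = poly (K a) z"
      by simp
  qed
  moreover have "poly_has_derivative K (pCons 0 (smult 2 (pCons 0 (G a * G')) + F' * H a + F a * H')) a"
    unfolding K_def
    by (rule poly_has_derivative_eq_rhs,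
        (rule poly_has_derivative_add poly_has_derivative_mult poly_has_derivative_pCons_0 F' G' H')+,
        rule poly_eqI_eval, simp add: algebra_simps)
  ultimately show ?thesis
    using poly_has_derivative_constant_eq_0 by (metis pCons_eq_0_iff)
qed

lemma x_flow_time_derivatives:
  fixes F G H :: "real \<Rightarrow> real \<Rightarrow> complex poly" and U Ut :: "real \<Rightarrow> real \<Rightarrow> complex"
  assumes smooth: "smooth_poly_family F" "smooth_poly_family G" "smooth_poly_family H"
    and deg: "\<And>x t. degree (F x t) \<le> n" "\<And>x t. degree (G x t) \<le> n" "\<And>x t. degree (H x t) \<le> n"
    and U: "\<And>x t. ((\<lambda>\<tau>. U x \<tau>) has_vector_derivative Ut x t) (at t)"
    and dF: "\<And>x t. poly_has_derivative (\<lambda>s. F s t)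
      (smult (- \<i> * U x t) (F x t) - smult (2 * \<i>) (pCons 0 (G x t))) x"
    and dG: "\<And>x t. poly_has_derivative (\<lambda>s. G s t) (smult \<i> (H x t - F x t)) x"
    and dH: "\<And>x t. poly_has_derivative (\<lambda>s. H s t)
      (smult (\<i> * U x t) (H x t) + smult (2 * \<i>) (pCons 0 (G x t))) x"
  obtains FT GT HT where
    "\<And>x t. poly_has_derivative (\<lambda>\<tau>. F x \<tau>) (FT x t) t"
    "\<And>x t. poly_has_derivative (\<lambda>\<tau>. G x \<tau>) (GT x t) t"
    "\<And>x t. poly_has_derivative (\<lambda>\<tau>. H x \<tau>) (HT x t) t"
    "\<And>x t. poly_has_derivative (\<lambda>s. FT s t)
      (smult (- \<i> * Ut x t) (F x t) + smult (- \<i> * U x t) (FT x t) - smult (2 * \<i>) (pCons 0 (GT x t))) x"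
    "\<And>x t. poly_has_derivative (\<lambda>s. GT s t) (smult \<i> (HT x t - FT x t)) x"
    "\<And>x t. poly_has_derivative (\<lambda>s. HT s t)
      (smult (\<i> * Ut x t) (H x t) + smult (\<i> * U x t) (HT x t) + smult (2 * \<i>) (pCons 0 (GT x t))) x"
proof -
  obtain FT where FT: "\<And>x t. poly_has_derivative (\<lambda>\<tau>. F x \<tau>) (FT x t) t"
    and FT_x: "\<And>x t W. poly_has_derivative
      (\<lambda>\<tau>. smult (- \<i> * U x \<tau>) (F x \<tau>) - smult (2 * \<i>) (pCons 0 (G x \<tau>))) W t
      \<Longrightarrow> poly_has_derivative (\<lambda>s. FT s t) W x"
    by (rule smooth_poly_family_t_derivative[OF smooth(1) deg(1) dF]) blast
  obtain GT where GT: "\<And>x t. poly_has_derivative (\<lambda>\<tau>. G x \<tau>) (GT x t) t"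
    and GT_x: "\<And>x t W. poly_has_derivative (\<lambda>\<tau>. smult \<i> (H x \<tau> - F x \<tau>)) W t
      \<Longrightarrow> poly_has_derivative (\<lambda>s. GT s t) W x"
    by (rule smooth_poly_family_t_derivative[OF smooth(2) deg(2) dG]) blast
  obtain HT where HT: "\<And>x t. poly_has_derivative (\<lambda>\<tau>. H x \<tau>) (HT x t) t"
    and HT_x: "\<And>x t W. poly_has_derivative
      (\<lambda>\<tau>. smult (\<i> * U x \<tau>) (H x \<tau>) + smult (2 * \<i>) (pCons 0 (G x \<tau>))) W t
      \<Longrightarrow> poly_has_derivative (\<lambda>s. HT s t) W x"
    by (rule smooth_poly_family_t_derivative[OF smooth(3) deg(3) dH]) blast
  have U': "((\<lambda>\<tau>. c * U x \<tau>) has_vector_derivative c * Ut x t) (at t)" for c x t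
    by (intro has_vector_derivative_mult_right U)
  show thesis
  proof (rule that[OF FT GT HT])
    show "poly_has_derivative (\<lambda>s. FT s t)
      (smult (- \<i> * Ut x t) (F x t) + smult (- \<i> * U x t) (FT x t) - smult (2 * \<i>) (pCons 0 (GT x t))) x"
      for x t
      by (rule FT_x, rule poly_has_derivative_eq_rhs,
          (rule poly_has_derivative_diff poly_has_derivative_smult poly_has_derivative_pCons_0
            has_vector_derivative_const U' FT GT)+, simp)
    show "poly_has_derivative (\<lambda>s. GT s t) (smult \<i> (HT x t - FT x t)) x" for x t
      by (rule GT_x, rule poly_has_derivative_eq_rhs,
          (rule poly_has_derivative_diff poly_has_derivative_smult has_vector_derivative_const FT HT)+, simp)
    show "poly_has_derivative (\<lambda>s. HT s t)
      (smult (\<i> * Ut x t) (H x t) + smult (\<i> * U x t) (HT x t) + smult (2 * \<i>) (pCons 0 (GT x t))) x"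
      for x t
      by (rule HT_x, rule poly_has_derivative_eq_rhs,
          (rule poly_has_derivative_add poly_has_derivative_smult poly_has_derivative_pCons_0
            has_vector_derivative_const U' HT GT)+, simp)
  qed
qed

lemma lax_time_evolution:
  fixes F G H Ft Gt Ht :: "real \<Rightarrow> real \<Rightarrow> complex poly" and U Ut :: "real \<Rightarrow> real \<Rightarrow> complex"
  assumes smooth: "smooth_poly_family F" "smooth_poly_family G" "smooth_poly_family H"
    and F: "\<And>x t. degree (F x t) = n \<and> lead_coeff (F x t) = 1"
    and H: "\<And>x t. degree (H x t) = n \<and> lead_coeff (H x t) = 1"
    and G: "\<And>x t. degree (G x t) < n"
    and deg_Ft: "\<And>x t. degree (Ft x t) \<le> r" and deg_Gt: "\<And>x t. degree (Gt x t) \<le> r"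
    and deg_Ht: "\<And>x t. degree (Ht x t) \<le> r"
    and U: "\<And>x t. ((\<lambda>\<tau>. U x \<tau>) has_vector_derivative Ut x t) (at t)"
    and dF: "\<And>x t. poly_has_derivative (\<lambda>s. F s t)
      (smult (- \<i> * U x t) (F x t) - smult (2 * \<i>) (pCons 0 (G x t))) x"
    and dG: "\<And>x t. poly_has_derivative (\<lambda>s. G s t) (smult \<i> (H x t - F x t)) x"
    and dH: "\<And>x t. poly_has_derivative (\<lambda>s. H s t)
      (smult (\<i> * U x t) (H x t) + smult (2 * \<i>) (pCons 0 (G x t))) x"
    and dFt: "\<And>x t. poly_has_derivative (\<lambda>s. Ft s t)
      (smult (- \<i> * U x t) (Ft x t) - smult (2 * \<i>) (pCons 0 (Gt x t))) x"
    and dGt: "\<And>x t. poly_has_derivative (\<lambda>s. Gt s t) ([:\<i> / 2 * Ut x t:] + smult \<i> (Ht x t - Ft x t)) x"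
    and dHt: "\<And>x t. poly_has_derivative (\<lambda>s. Ht s t)
      (smult (\<i> * U x t) (Ht x t) + smult (2 * \<i>) (pCons 0 (Gt x t))) x"
    and curve: "\<And>x t z. z\<^sup>2 * (poly (G x t) z)\<^sup>2 + z * poly (F x t) z * poly (H x t) z = R z"
  shows "poly_has_derivative (\<lambda>\<tau>. F x \<tau>) (smult 2 (G x t * Ft x t - F x t * Gt x t)) t"
    and "\<exists>G'. poly_has_derivative (\<lambda>\<tau>. G x \<tau>) G' t \<and> pCons 0 G' = F x t * Ht x t - Ft x t * H x t"
    and "poly_has_derivative (\<lambda>\<tau>. H x \<tau>) (smult 2 (H x t * Gt x t - G x t * Ht x t)) t"
proof -
  have deg_n: "degree (F x t) \<le> n" "degree (G x t) \<le> n" "degree (H x t) \<le> n" for x t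
    using F[of x t] G[of x t] H[of x t] by auto
  obtain FT GT HT where FT: "\<And>x t. poly_has_derivative (\<lambda>\<tau>. F x \<tau>) (FT x t) t"
    and GT: "\<And>x t. poly_has_derivative (\<lambda>\<tau>. G x \<tau>) (GT x t) t"
    and HT: "\<And>x t. poly_has_derivative (\<lambda>\<tau>. H x \<tau>) (HT x t) t"
    and dFT: "\<And>x t. poly_has_derivative (\<lambda>s. FT s t)
      (smult (- \<i> * Ut x t) (F x t) + smult (- \<i> * U x t) (FT x t) - smult (2 * \<i>) (pCons 0 (GT x t))) x"
    and dGT: "\<And>x t. poly_has_derivative (\<lambda>s. GT s t) (smult \<i> (HT x t - FT x t)) x"
    and dHT: "\<And>x t. poly_has_derivative (\<lambda>s. HT s t)
      (smult (\<i> * Ut x t) (H x t) + smult (\<i> * U x t) (HT x t) + smult (2 * \<i>) (pCons 0 (GT x t))) x"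
    by (rule x_flow_time_derivatives[OF smooth deg_n U dF dG dH]) blast
  have curve_t: "smult 2 (pCons 0 (G s t * GT s t)) + FT s t * H s t + F s t * HT s t = 0" for s
    by (rule poly_has_derivative_curve_eq_0[OF FT GT HT curve])
  have deg_T: "degree (FT s t) \<le> n" "degree (GT s t) \<le> n" "degree (HT s t) \<le> n" for s
    using poly_has_derivative_degree_le[OF FT deg_n(1)] poly_has_derivative_degree_le[OF GT deg_n(2)]
      poly_has_derivative_degree_le[OF HT deg_n(3)] by blast+
  note lax = lax_time_derivatives_eq[where F="\<lambda>s. F s t" and G="\<lambda>s. G s t" and H="\<lambda>s. H s t"
      and Ft="\<lambda>s. Ft s t" and Gt="\<lambda>s. Gt s t" and Ht="\<lambda>s. Ht s t" and FT="\<lambda>s. FT s t"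
      and GT="\<lambda>s. GT s t" and HT="\<lambda>s. HT s t" and U="\<lambda>s. U s t" and Ut="\<lambda>s. Ut s t",
      OF F H G deg_Ft deg_Gt deg_Ht deg_T dF dG dH dFt dGt dHt dFT dGT dHT curve_t]
  show "poly_has_derivative (\<lambda>\<tau>. F x \<tau>) (smult 2 (G x t * Ft x t - F x t * Gt x t)) t"
    using FT[of x t] lax(1)[of x] by simp
  show "\<exists>G'. poly_has_derivative (\<lambda>\<tau>. G x \<tau>) G' t \<and> pCons 0 G' = F x t * Ht x t - Ft x t * H x t"
    using GT[of x t] lax(2)[of x] by blast
  show "poly_has_derivative (\<lambda>\<tau>. H x \<tau>) (smult 2 (H x t * Gt x t - G x t * Ht x t)) t"
    using HT[of x t] lax(3)[of x] by simp
qed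

section \<open>The function phi\<close>

lemma eventually_nhds_neq_of_isCont:
  fixes f :: "'a::metric_space \<Rightarrow> 'b::t1_space"
  assumes "isCont f a" "f a \<noteq> c"
  shows "eventually (\<lambda>s. f s \<noteq> c) (nhds a)"
  using continuous_at_avoid[OF assms] unfolding eventually_nhds_metric by (metis dist_commute)

lemma has_vector_derivative_unique_ev:
  assumes "eventually (\<lambda>s. u s = v s) (nhds a)"
    and "(u has_vector_derivative u') (at a)" "(v has_vector_derivative v') (at a)"
  shows "u' = v'"
proof -
  have "eventually (\<lambda>s. s \<in> UNIV \<longrightarrow> u s = v s) (nhds a)"
    using assms(1) by simp
  with assms(2) have "(v has_vector_derivative u') (at a)"
    using has_vector_derivative_cong_ev[where S=UNIV] eventually_nhds_x_imp_x[OF assms(1)] by blast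
  then show ?thesis
    using assms(3) by (rule vector_derivative_unique_at)
qed

definition phi_at :: "complex \<Rightarrow> complex \<Rightarrow> complex \<Rightarrow> complex \<Rightarrow> complex \<Rightarrow> complex" where
  "phi_at f g h z y = (if f \<noteq> 0 then (y - z * g) / f else z * h / (y + z * g))"

lemma phi_eq_phi_at: "phi F G H z y x t = phi_at (poly (F x t) z) (poly (G x t) z) (poly (H x t) z) z y"
  by (simp add: phi_def phi_at_def)

lemma phi_at_identities:
  assumes curve: "y\<^sup>2 = z\<^sup>2 * g\<^sup>2 + z * f * h" and nondeg: "f \<noteq> 0 \<or> y + z * g \<noteq> 0"
  shows "phi_at f g h z y * f = y - z * g" "phi_at f g h z y * (y + z * g) = z * h"
proof -
  have product: "(y - z * g) * (y + z * g) = z * f * h"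
    using curve by (simp add: algebra_simps power2_eq_square)
  show "phi_at f g h z y * f = y - z * g"
  proof (cases "f = 0")
    case True
    with nondeg product show ?thesis
      by (simp add: phi_at_def)
  qed (simp add: phi_at_def)
  show "phi_at f g h z y * (y + z * g) = z * h"
  proof (cases "f = 0")
    case False
    then have "phi_at f g h z y * (y + z * g) = (y - z * g) * (y + z * g) / f"
      by (simp add: phi_at_def)
    with False product show ?thesis
      by simp
  qed (use nondeg in \<open>simp add: phi_at_def\<close>)
qed

lemma phi_at_involution:
  assumes "y\<^sup>2 = z\<^sup>2 * g\<^sup>2 + z * f * h" "f \<noteq> 0"
  shows "phi_at f g h z y + phi_at f g h z (- y) = - 2 * z * g / f"
    and "phi_at f g h z y * phi_at f g h z (- y) = - z * h / f"
    and "phi_at f g h z y - phi_at f g h z (- y) = 2 * y / f"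
proof -
  have "phi_at f g h z y * phi_at f g h z (- y) = (y - z * g) * (- y - z * g) / (f * f)"
    using assms(2) by (simp add: phi_at_def)
  also have "(y - z * g) * (- y - z * g) = - z * h * f"
    using assms(1) by (simp add: algebra_simps power2_eq_square)
  finally show "phi_at f g h z y * phi_at f g h z (- y) = - z * h / f"
    using assms(2) by simp
qed (use assms(2) in \<open>simp_all add: phi_at_def field_simps\<close>)

lemma eventually_phi_at_identities:
  fixes f g h :: "real \<Rightarrow> complex"
  assumes cont: "isCont f a" "isCont g a"
    and curve: "\<And>s. y\<^sup>2 = z\<^sup>2 * (g s)\<^sup>2 + z * f s * h s"
    and nondeg: "f a \<noteq> 0 \<or> y + z * g a \<noteq> 0"
  shows "eventually (\<lambda>s. phi_at (f s) (g s) (h s) z y * f s = y - z * g s \<and>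
      phi_at (f s) (g s) (h s) z y * (y + z * g s) = z * h s) (nhds a)"
proof -
  have "eventually (\<lambda>s. f s \<noteq> 0 \<or> y + z * g s \<noteq> 0) (nhds a)"
  proof (cases "f a = 0")
    case True
    have "isCont (\<lambda>s. y + z * g s) a"
      using cont(2) by (auto intro!: continuous_intros)
    with True nondeg have "eventually (\<lambda>s. y + z * g s \<noteq> 0) (nhds a)"
      by (intro eventually_nhds_neq_of_isCont) simp_all
    then show ?thesis
      by (rule eventually_mono) simp
  next
    case False
    then have "eventually (\<lambda>s. f s \<noteq> 0) (nhds a)"
      by (rule eventually_nhds_neq_of_isCont[OF cont(1)])
    then show ?thesis
      by (rule eventually_mono) simp
  qed
  then show ?thesis
    by (rule eventually_mono) (use phi_at_identities[OF curve] in auto)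
qed

lemma phi_at_differentiable:
  fixes f g h :: "real \<Rightarrow> complex"
  assumes f: "(f has_vector_derivative f') (at a)"
    and g: "(g has_vector_derivative g') (at a)"
    and h: "(h has_vector_derivative h') (at a)"
    and curve: "\<And>s. y\<^sup>2 = z\<^sup>2 * (g s)\<^sup>2 + z * f s * h s"
    and nondeg: "f a \<noteq> 0 \<or> y + z * g a \<noteq> 0"
  shows "(\<lambda>s. phi_at (f s) (g s) (h s) z y) differentiable (at a)"
proof -
  let ?\<phi> = "\<lambda>s. phi_at (f s) (g s) (h s) z y"
  have cont: "isCont f a" "isCont g a"
    using f g by (auto intro: has_vector_derivative_continuous)
  obtain q where q: "q differentiable (at a)" and ev_q: "eventually (\<lambda>s. ?\<phi> s = q s) (nhds a)"
  proof (cases "f a = 0")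
    case False
    show thesis
    proof
      show "(\<lambda>s. (y - z * g s) / f s) differentiable (at a)"
        using f g False by (auto intro!: derivative_intros intro: differentiableI_vector)
      show "eventually (\<lambda>s. ?\<phi> s = (y - z * g s) / f s) (nhds a)"
        using eventually_nhds_neq_of_isCont[OF cont(1) False]
        by (rule eventually_mono) (simp add: phi_at_def)
    qed
  next
    case True
    with nondeg have nz: "y + z * g a \<noteq> 0"
      by simp
    have "isCont (\<lambda>s. y + z * g s) a"
      using cont(2) by (auto intro!: continuous_intros)
    then have "eventually (\<lambda>s. y + z * g s \<noteq> 0) (nhds a)"
      using nz by (rule eventually_nhds_neq_of_isCont)
    show thesis
    proof
      show "(\<lambda>s. z * h s / (y + z * g s)) differentiable (at a)"
        using g h nz by (auto intro!: derivative_intros intro: differentiableI_vector)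
      show "eventually (\<lambda>s. ?\<phi> s = z * h s / (y + z * g s)) (nhds a)"
        using eventually_conj[OF eventually_phi_at_identities[OF cont curve nondeg]
            \<open>eventually (\<lambda>s. y + z * g s \<noteq> 0) (nhds a)\<close>]
        by (rule eventually_mono) (auto simp: eq_divide_eq)
    qed
  qed
  have "(?\<phi> has_vector_derivative vector_derivative q (at a)) (at a) \<longleftrightarrow>
      (q has_vector_derivative vector_derivative q (at a)) (at a)"
    by (rule has_vector_derivative_cong_ev) (use ev_q eventually_nhds_x_imp_x[OF ev_q] in auto)
  with q[unfolded vector_derivative_works] have "(?\<phi> has_vector_derivative vector_derivative q (at a)) (at a)"
    by simp
  then show ?thesis
    by (rule differentiableI_vector)
qed

lemma has_vector_derivative_phi_at:
  fixes f g h :: "real \<Rightarrow> complex"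
  assumes f: "(f has_vector_derivative f') (at a)"
    and g: "(g has_vector_derivative g') (at a)"
    and h: "(h has_vector_derivative h') (at a)"
    and curve: "\<And>s. y\<^sup>2 = z\<^sup>2 * (g s)\<^sup>2 + z * f s * h s"
    and nondeg: "f a \<noteq> 0 \<or> y + z * g a \<noteq> 0"
  obtains p where "((\<lambda>s. phi_at (f s) (g s) (h s) z y) has_vector_derivative p) (at a)"
    and "p * f a + phi_at (f a) (g a) (h a) z y * f' = - z * g'"
    and "p * (y + z * g a) + phi_at (f a) (g a) (h a) z y * (z * g') = z * h'"
proof -
  define \<phi> where "\<phi> s = phi_at (f s) (g s) (h s) z y" for s
  have "(\<phi> has_vector_derivative vector_derivative \<phi> (at a)) (at a)"
    using phi_at_differentiable[OF f g h curve nondeg]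
    unfolding \<phi>_def[abs_def] vector_derivative_works .
  then obtain p where p: "(\<phi> has_vector_derivative p) (at a)"
    by blast
  have cont: "isCont f a" "isCont g a"
    using f g by (auto intro: has_vector_derivative_continuous)
  note ids = eventually_phi_at_identities[OF cont curve nondeg, folded \<phi>_def]
  have "p * f a + \<phi> a * f' = - z * g'"
  proof (rule has_vector_derivative_unique_ev)
    show "eventually (\<lambda>s. \<phi> s * f s = y - z * g s) (nhds a)"
      using ids by (rule eventually_mono) simp
    show "((\<lambda>s. \<phi> s * f s) has_vector_derivative p * f a + \<phi> a * f') (at a)"
      using has_vector_derivative_mult[OF p f] by (simp add: algebra_simps)
    show "((\<lambda>s. y - z * g s) has_vector_derivative - z * g') (at a)"
      using g by (auto intro!: derivative_eq_intros)
  qed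
  moreover have "p * (y + z * g a) + \<phi> a * (z * g') = z * h'"
  proof (rule has_vector_derivative_unique_ev)
    show "eventually (\<lambda>s. \<phi> s * (y + z * g s) = z * h s) (nhds a)"
      using ids by (rule eventually_mono) simp
    show "((\<lambda>s. \<phi> s * (y + z * g s)) has_vector_derivative p * (y + z * g a) + \<phi> a * (z * g')) (at a)"
      using g by (auto intro!: derivative_eq_intros p simp: algebra_simps)
    show "((\<lambda>s. z * h s) has_vector_derivative z * h') (at a)"
      using h by (auto intro!: derivative_eq_intros)
  qed
  ultimately show thesis
    using p that unfolding \<phi>_def by blast
qed

lemma phi_at_riccati:
  fixes f g h :: "real \<Rightarrow> complex"
  assumes f: "(f has_vector_derivative - \<i> * U * f a - 2 * \<i> * z * g a) (at a)"
    and g: "(g has_vector_derivative \<i> * (h a - f a)) (at a)"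
    and h: "(h has_vector_derivative \<i> * U * h a + 2 * \<i> * z * g a) (at a)"
    and curve: "\<And>s. y\<^sup>2 = z\<^sup>2 * (g s)\<^sup>2 + z * f s * h s"
    and nondeg: "f a \<noteq> 0 \<or> y + z * g a \<noteq> 0"
  shows "\<exists>p. ((\<lambda>s. phi_at (f s) (g s) (h s) z y) has_vector_derivative p) (at a) \<and>
    (phi_at (f a) (g a) (h a) z y)\<^sup>2 - \<i> * p = z + U * phi_at (f a) (g a) (h a) z y"
proof -
  let ?\<phi> = "phi_at (f a) (g a) (h a) z y"
  obtain p where p: "((\<lambda>s. phi_at (f s) (g s) (h s) z y) has_vector_derivative p) (at a)"
    and r1: "p * f a + ?\<phi> * (- \<i> * U * f a - 2 * \<i> * z * g a) = - z * (\<i> * (h a - f a))"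
    and r2: "p * (y + z * g a) + ?\<phi> * (z * (\<i> * (h a - f a))) = z * (\<i> * U * h a + 2 * \<i> * z * g a)"
    by (rule has_vector_derivative_phi_at[OF f g h curve nondeg])
  have v1: "?\<phi> * f a = y - z * g a" and v2: "?\<phi> * (y + z * g a) = z * h a"
    using phi_at_identities[OF curve nondeg] by auto
  have ii: "\<i> * \<i> = (- 1 :: complex)"
    by simp
  have "f a * (?\<phi>\<^sup>2 - \<i> * p - (z + U * ?\<phi>)) = 0"
    using r1 v1 v2 ii by algebra
  moreover have "(y + z * g a) * (?\<phi>\<^sup>2 - \<i> * p - (z + U * ?\<phi>)) = 0"
    using r2 v1 v2 ii by algebra
  ultimately have "?\<phi>\<^sup>2 - \<i> * p = z + U * ?\<phi>"
    using nondeg by auto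
  with p show ?thesis
    by blast
qed

lemma phi_at_time_equation:
  fixes f g h a b c :: "real \<Rightarrow> real \<Rightarrow> complex"
  assumes fx: "((\<lambda>s. f s t) has_vector_derivative - \<i> * U * f x t - 2 * \<i> * z * g x t) (at x)"
    and gx: "((\<lambda>s. g s t) has_vector_derivative \<i> * (h x t - f x t)) (at x)"
    and hx: "((\<lambda>s. h s t) has_vector_derivative \<i> * U * h x t + 2 * \<i> * z * g x t) (at x)"
    and ax: "((\<lambda>s. a s t) has_vector_derivative - \<i> * U * a x t - 2 * \<i> * z * b x t) (at x)"
    and ft: "((\<lambda>\<tau>. f x \<tau>) has_vector_derivative 2 * (g x t * a x t - f x t * b x t)) (at t)"
    and gt: "\<exists>g'. ((\<lambda>\<tau>. g x \<tau>) has_vector_derivative g') (at t) \<and> z * g' = f x t * c x t - a x t * h x t"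
    and ht: "((\<lambda>\<tau>. h x \<tau>) has_vector_derivative 2 * (h x t * b x t - g x t * c x t)) (at t)"
    and curve: "\<And>s \<tau>. y\<^sup>2 = z\<^sup>2 * (g s \<tau>)\<^sup>2 + z * f s \<tau> * h s \<tau>"
    and nondeg: "f x t \<noteq> 0 \<or> y + z * g x t \<noteq> 0" and "z \<noteq> 0"
  shows "\<exists>phit dx. ((\<lambda>\<tau>. phi_at (f x \<tau>) (g x \<tau>) (h x \<tau>) z y) has_vector_derivative phit) (at t) \<and>
    ((\<lambda>s. phi_at (f s t) (g s t) (h s t) z y * a s t) has_vector_derivative dx) (at x) \<and>
    phit = a x t - c x t + (\<i> / z) * dx"
proof -
  let ?\<phi> = "phi_at (f x t) (g x t) (h x t) z y"
  obtain p where p: "((\<lambda>s. phi_at (f s t) (g s t) (h s t) z y) has_vector_derivative p) (at x)"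
    and r1: "p * f x t + ?\<phi> * (- \<i> * U * f x t - 2 * \<i> * z * g x t) = - z * (\<i> * (h x t - f x t))"
    and r2: "p * (y + z * g x t) + ?\<phi> * (z * (\<i> * (h x t - f x t)))
      = z * (\<i> * U * h x t + 2 * \<i> * z * g x t)"
    by (rule has_vector_derivative_phi_at[OF fx gx hx curve nondeg])
  obtain g' where g': "((\<lambda>\<tau>. g x \<tau>) has_vector_derivative g') (at t)"
    and G_t: "z * g' = f x t * c x t - a x t * h x t"
    using gt by blast
  obtain q where q: "((\<lambda>\<tau>. phi_at (f x \<tau>) (g x \<tau>) (h x \<tau>) z y) has_vector_derivative q) (at t)"
    and q1: "q * f x t + ?\<phi> * (2 * (g x t * a x t - f x t * b x t)) = - z * g'"
    and q2: "q * (y + z * g x t) + ?\<phi> * (z * g') = z * (2 * (h x t * b x t - g x t * c x t))"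
    by (rule has_vector_derivative_phi_at[OF ft g' ht curve nondeg])
  define dx where "dx = ?\<phi> * (- \<i> * U * a x t - 2 * \<i> * z * b x t) + p * a x t"
  have dx: "((\<lambda>s. phi_at (f s t) (g s t) (h s t) z y * a s t) has_vector_derivative dx) (at x)"
    unfolding dx_def by (rule has_vector_derivative_mult[OF p ax])
  have v1: "?\<phi> * f x t = y - z * g x t" and v2: "?\<phi> * (y + z * g x t) = z * h x t"
    using phi_at_identities[OF curve nondeg] by auto
  have ii: "\<i> * \<i> = (- 1 :: complex)"
    by simp
  have "f x t * (z * q - (z * a x t - z * c x t + \<i> * dx)) = 0"
    using r1 q1 G_t ii unfolding dx_def by algebra
  moreover have "(y + z * g x t) * (z * q - (z * a x t - z * c x t + \<i> * dx)) = 0"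
    using r2 q2 G_t v1 v2 ii unfolding dx_def by algebra
  ultimately have "z * q - (z * a x t - z * c x t + \<i> * dx) = 0"
    using nondeg by auto
  then have "q = a x t - c x t + (\<i> / z) * dx"
    using \<open>z \<noteq> 0\<close> by (simp add: field_simps)
  with q dx show ?thesis
    by blast
qed

lemma lax_time_evolution_pointwise:
  fixes F G H Ft Gt Ht :: "real \<Rightarrow> real \<Rightarrow> complex poly" and U Ut :: "real \<Rightarrow> real \<Rightarrow> complex"
  assumes smooth: "smooth_poly_family F" "smooth_poly_family G" "smooth_poly_family H"
      "smooth_poly_family Ft" "smooth_poly_family Gt" "smooth_poly_family Ht"
    and F: "\<And>x t. degree (F x t) = n \<and> lead_coeff (F x t) = 1"
    and H: "\<And>x t. degree (H x t) = n \<and> lead_coeff (H x t) = 1"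
    and G: "\<And>x t. degree (G x t) < n"
    and deg_Ft: "\<And>x t. degree (Ft x t) \<le> r" and deg_Gt: "\<And>x t. degree (Gt x t) \<le> r"
    and deg_Ht: "\<And>x t. degree (Ht x t) \<le> r"
    and U: "\<And>x t. ((\<lambda>\<tau>. U x \<tau>) has_vector_derivative Ut x t) (at t)"
    and eqF: "\<And>z x t. ((\<lambda>s. poly (F s t) z) has_vector_derivative
      - \<i> * U x t * poly (F x t) z - 2 * \<i> * z * poly (G x t) z) (at x)"
    and eqH: "\<And>z x t. ((\<lambda>s. poly (H s t) z) has_vector_derivative
      \<i> * U x t * poly (H x t) z + 2 * \<i> * z * poly (G x t) z) (at x)"
    and eqG: "\<And>z x t. ((\<lambda>s. poly (G s t) z) has_vector_derivative \<i> * (poly (H x t) z - poly (F x t) z)) (at x)"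
    and eqFt: "\<And>z x t. ((\<lambda>s. poly (Ft s t) z) has_vector_derivative
      - \<i> * U x t * poly (Ft x t) z - 2 * \<i> * z * poly (Gt x t) z) (at x)"
    and eqHt: "\<And>z x t. ((\<lambda>s. poly (Ht s t) z) has_vector_derivative
      \<i> * U x t * poly (Ht x t) z + 2 * \<i> * z * poly (Gt x t) z) (at x)"
    and eqU: "\<And>z x t. \<exists>dGt. ((\<lambda>s. poly (Gt s t) z) has_vector_derivative dGt) (at x) \<and>
      Ut x t = - 2 * \<i> * dGt - 2 * (poly (Ht x t) z - poly (Ft x t) z)"
    and curve: "\<And>z x t. z\<^sup>2 * (poly (G x t) z)\<^sup>2 + z * poly (F x t) z * poly (H x t) z = R z"
  shows "((\<lambda>\<tau>. poly (F x \<tau>) z) has_vector_derivative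
      2 * (poly (G x t) z * poly (Ft x t) z - poly (F x t) z * poly (Gt x t) z)) (at t)"
    and "\<exists>dG. ((\<lambda>\<tau>. poly (G x \<tau>) z) has_vector_derivative dG) (at t) \<and>
      z * dG = poly (F x t) z * poly (Ht x t) z - poly (Ft x t) z * poly (H x t) z"
    and "((\<lambda>\<tau>. poly (H x \<tau>) z) has_vector_derivative
      2 * (poly (H x t) z * poly (Gt x t) z - poly (G x t) z * poly (Ht x t) z)) (at t)"
proof -
  have deg_n: "degree (F x t) \<le> n" "degree (G x t) \<le> n" "degree (H x t) \<le> n" for x t
    using F[of x t] G[of x t] H[of x t] by auto
  have dF: "poly_has_derivative (\<lambda>s. F s t) (smult (- \<i> * U x t) (F x t) - smult (2 * \<i>) (pCons 0 (G x t))) x"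
    for x t
    by (rule smooth_poly_family_x_derivative[OF smooth(1) deg_n(1)]) (use eqF in \<open>simp add: algebra_simps\<close>)
  have dG: "poly_has_derivative (\<lambda>s. G s t) (smult \<i> (H x t - F x t)) x" for x t
    by (rule smooth_poly_family_x_derivative[OF smooth(2) deg_n(2)]) (use eqG in \<open>simp add: algebra_simps\<close>)
  have dH: "poly_has_derivative (\<lambda>s. H s t) (smult (\<i> * U x t) (H x t) + smult (2 * \<i>) (pCons 0 (G x t))) x"
    for x t
    by (rule smooth_poly_family_x_derivative[OF smooth(3) deg_n(3)]) (use eqH in \<open>simp add: algebra_simps\<close>)
  have dFt: "poly_has_derivative (\<lambda>s. Ft s t)
      (smult (- \<i> * U x t) (Ft x t) - smult (2 * \<i>) (pCons 0 (Gt x t))) x" for x t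
    by (rule smooth_poly_family_x_derivative[OF smooth(4) deg_Ft]) (use eqFt in \<open>simp add: algebra_simps\<close>)
  have dHt: "poly_has_derivative (\<lambda>s. Ht s t)
      (smult (\<i> * U x t) (Ht x t) + smult (2 * \<i>) (pCons 0 (Gt x t))) x" for x t
    by (rule smooth_poly_family_x_derivative[OF smooth(6) deg_Ht]) (use eqHt in \<open>simp add: algebra_simps\<close>)
  have dGt: "poly_has_derivative (\<lambda>s. Gt s t) ([:\<i> / 2 * Ut x t:] + smult \<i> (Ht x t - Ft x t)) x" for x t
  proof (rule smooth_poly_family_x_derivative[OF smooth(5) deg_Gt])
    fix z
    obtain dGt where dGt: "((\<lambda>s. poly (Gt s t) z) has_vector_derivative dGt) (at x)"
      and Ut: "Ut x t = - 2 * \<i> * dGt - 2 * (poly (Ht x t) z - poly (Ft x t) z)"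
      using eqU by blast
    have "poly ([:\<i> / 2 * Ut x t:] + smult \<i> (Ht x t - Ft x t)) z = dGt"
      unfolding Ut by (simp add: algebra_simps)
    with dGt show "((\<lambda>s. poly (Gt s t) z) has_vector_derivative
        poly ([:\<i> / 2 * Ut x t:] + smult \<i> (Ht x t - Ft x t)) z) (at x)"
      by simp
  qed
  note lax = lax_time_evolution[OF smooth(1-3) F H G deg_Ft deg_Gt deg_Ht U dF dG dH dFt dGt dHt curve]
  show "((\<lambda>\<tau>. poly (F x \<tau>) z) has_vector_derivative
      2 * (poly (G x t) z * poly (Ft x t) z - poly (F x t) z * poly (Gt x t) z)) (at t)"
    using poly_has_derivative_poly[OF lax(1) deg_n(1), where z=z] by simp
  show "\<exists>dG. ((\<lambda>\<tau>. poly (G x \<tau>) z) has_vector_derivative dG) (at t) \<and>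
      z * dG = poly (F x t) z * poly (Ht x t) z - poly (Ft x t) z * poly (H x t) z"
  proof -
    obtain G' where G': "poly_has_derivative (\<lambda>\<tau>. G x \<tau>) G' t"
      and "pCons 0 G' = F x t * Ht x t - Ft x t * H x t"
      using lax(2) by blast
    then have "z * poly G' z = poly (F x t) z * poly (Ht x t) z - poly (Ft x t) z * poly (H x t) z"
      by (metis poly_diff poly_mult poly_pCons add_0)
    with poly_has_derivative_poly[OF G' deg_n(2)] show ?thesis
      by blast
  qed
  show "((\<lambda>\<tau>. poly (H x \<tau>) z) has_vector_derivative
      2 * (poly (H x t) z * poly (Gt x t) z - poly (G x t) z * poly (Ht x t) z)) (at t)"
    using poly_has_derivative_poly[OF lax(3) deg_n(3), where z=z] by simp
qed

theorem lemma4p1: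
  fixes n r :: nat
    and u :: "real \<Rightarrow> real \<Rightarrow> real"
    and F G H Ft Gt Ht :: "real \<Rightarrow> real \<Rightarrow> complex poly"
    and E :: "nat \<Rightarrow> complex"
  assumes n_pos: "n \<ge> 1"
    and u_smooth: "smooth_UNIV (\<lambda>(x,t). u x t)"
    and sm: "smooth_poly_family F" "smooth_poly_family G" "smooth_poly_family H"
            "smooth_poly_family Ft" "smooth_poly_family Gt" "smooth_poly_family Ht"
    and degF: "\<And>x t. degree (F x t) = n \<and> lead_coeff (F x t) = 1"
    and degH: "\<And>x t. degree (H x t) = n \<and> lead_coeff (H x t) = 1"
    and degG: "\<And>x t. degree (G x t) \<le> n - 1"
    and degFt: "\<And>x t. degree (Ft x t) = r"
    and degHt: "\<And>x t. degree (Ht x t) = r"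
    and degGt: "\<And>x t. degree (Gt x t) \<le> r - 1"
    and Gt0: "r = 0 \<Longrightarrow> (\<And>x t. Gt x t = 0)"
    and eqF: "\<And>z x t. ((\<lambda>s. poly (F s t) z) has_vector_derivative
               (- \<i> * complex_of_real (deriv (\<lambda>s. u s t) x) * poly (F x t) z
                - 2 * \<i> * z * poly (G x t) z)) (at x)"
    and eqH: "\<And>z x t. ((\<lambda>s. poly (H s t) z) has_vector_derivative
               (\<i> * complex_of_real (deriv (\<lambda>s. u s t) x) * poly (H x t) z
                + 2 * \<i> * z * poly (G x t) z)) (at x)"
    and eqG: "\<And>z x t. ((\<lambda>s. poly (G s t) z) has_vector_derivative
               (\<i> * (poly (H x t) z - poly (F x t) z))) (at x)"
    and eqFt: "\<And>z x t. ((\<lambda>s. poly (Ft s t) z) has_vector_derivative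
               (- \<i> * complex_of_real (deriv (\<lambda>s. u s t) x) * poly (Ft x t) z
                - 2 * \<i> * z * poly (Gt x t) z)) (at x)"
    and eqHt: "\<And>z x t. ((\<lambda>s. poly (Ht s t) z) has_vector_derivative
               (\<i> * complex_of_real (deriv (\<lambda>s. u s t) x) * poly (Ht x t) z
                + 2 * \<i> * z * poly (Gt x t) z)) (at x)"
    and eqU: "\<And>z x t. \<exists>dGt. ((\<lambda>s. poly (Gt s t) z) has_vector_derivative dGt) (at x) \<and>
               complex_of_real (deriv (\<lambda>\<tau>. deriv (\<lambda>s. u s \<tau>) x) t)
                 = - 2 * \<i> * dGt - 2 * (poly (Ht x t) z - poly (Ft x t) z)"
    and E0: "E 0 = 0"
    and Enz: "\<And>m. 1 \<le> m \<Longrightarrow> m \<le> 2 * n \<Longrightarrow> E m \<noteq> 0"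
    and curve: "\<And>z x t. z\<^sup>2 * (poly (G x t) z)\<^sup>2 + z * poly (F x t) z * poly (H x t) z = Rpoly n E z"
  shows "\<forall>z y x t. y\<^sup>2 = Rpoly n E z \<longrightarrow>
     ((poly (F x t) z \<noteq> 0 \<or> y + z * poly (G x t) z \<noteq> 0) \<longrightarrow>
        (\<exists>phix. ((\<lambda>s. phi F G H z y s t) has_vector_derivative phix) (at x) \<and>
           (phi F G H z y x t)\<^sup>2 - \<i> * phix
             = z + complex_of_real (deriv (\<lambda>s. u s t) x) * phi F G H z y x t)) \<and>
     ((poly (F x t) z \<noteq> 0 \<or> y + z * poly (G x t) z \<noteq> 0) \<and> z \<noteq> 0 \<longrightarrow>
        (\<exists>phit dx. ((\<lambda>\<tau>. phi F G H z y x \<tau>) has_vector_derivative phit) (at t) \<and>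
           ((\<lambda>s. phi F G H z y s t * poly (Ft s t) z) has_vector_derivative dx) (at x) \<and>
           phit = poly (Ft x t) z - poly (Ht x t) z + (\<i> / z) * dx)) \<and>
     (poly (F x t) z \<noteq> 0 \<longrightarrow>
        phi F G H z y x t + phi F G H z (- y) x t = - 2 * z * poly (G x t) z / poly (F x t) z \<and>
        phi F G H z y x t * phi F G H z (- y) x t = - z * poly (H x t) z / poly (F x t) z \<and>
        phi F G H z y x t - phi F G H z (- y) x t = 2 * y / poly (F x t) z)"
proof (intro allI impI conjI)
  fix z y x t
  assume "y\<^sup>2 = Rpoly n E z"
  with curve have curve_y: "\<And>s \<tau>. y\<^sup>2 = z\<^sup>2 * (poly (G s \<tau>) z)\<^sup>2 + z * poly (F s \<tau>) z * poly (H s \<tau>) z"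
    by simp
  show "\<exists>phix. ((\<lambda>s. phi F G H z y s t) has_vector_derivative phix) (at x) \<and>
      (phi F G H z y x t)\<^sup>2 - \<i> * phix = z + complex_of_real (deriv (\<lambda>s. u s t) x) * phi F G H z y x t"
    if "poly (F x t) z \<noteq> 0 \<or> y + z * poly (G x t) z \<noteq> 0"
    unfolding phi_eq_phi_at by (rule phi_at_riccati[OF eqF eqG eqH curve_y that])
  show "\<exists>phit dx. ((\<lambda>\<tau>. phi F G H z y x \<tau>) has_vector_derivative phit) (at t) \<and>
      ((\<lambda>s. phi F G H z y s t * poly (Ft s t) z) has_vector_derivative dx) (at x) \<and>
      phit = poly (Ft x t) z - poly (Ht x t) z + (\<i> / z) * dx"
    if "(poly (F x t) z \<noteq> 0 \<or> y + z * poly (G x t) z \<noteq> 0) \<and> z \<noteq> 0"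
  proof -
    have deg_G: "degree (G x t) < n" for x t
      using degG[of x t] n_pos by linarith
    note u_xt = has_vector_derivative_of_real[OF smooth_deriv_x_has_derivative_t[OF u_smooth]]
    note lax = lax_time_evolution_pointwise[OF sm degF degH deg_G degFt[THEN eq_imp_le]
        order.trans[OF degGt diff_le_self] degHt[THEN eq_imp_le] u_xt eqF eqH eqG eqFt eqHt eqU curve]
    show ?thesis
      unfolding phi_eq_phi_at
      by (rule phi_at_time_equation[where f="\<lambda>x t. poly (F x t) z" and g="\<lambda>x t. poly (G x t) z"
            and h="\<lambda>x t. poly (H x t) z" and a="\<lambda>x t. poly (Ft x t) z" and b="\<lambda>x t. poly (Gt x t) z"
            and c="\<lambda>x t. poly (Ht x t) z", OF eqF eqG eqH eqFt lax curve_y])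
        (use that in auto)
  qed
  show "phi F G H z y x t + phi F G H z (- y) x t = - 2 * z * poly (G x t) z / poly (F x t) z"
    and "phi F G H z y x t * phi F G H z (- y) x t = - z * poly (H x t) z / poly (F x t) z"
    and "phi F G H z y x t - phi F G H z (- y) x t = 2 * y / poly (F x t) z"
    if "poly (F x t) z \<noteq> 0"
    unfolding phi_eq_phi_at using phi_at_involution[OF curve_y that] by simp_all
qed

end
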